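(* Let $n\ge1$, let $\Omega=\begin{pmatrix}0&I_n\\-I_n&0\end{pmatrix}$ and $C(X,Y)=X\Omega Y^T$ for row vectors $X,Y\in\mathbb C^{2n}$. Let $F(x)=(f_0(x),\dots,f_{2n-1}(x))$ be a vector of $2n$ (sufficiently differentiable) functions of $x$ satisfying $$C(F^{(i)},F^{(i+1)})=0\ \ (0\le i\le n-2),\qquad C(F^{(n-1)},F^{(n)})=-1.$$ Then the $(n+1)\times 2n$ matrix whose rows are, from top to bottom, $F^{(n)},F,F',\dots,F^{(n-1)}$ can be completed to a symplectic matrix $\Phi(x)\in Sp(2n,\mathbb C)$ (i.e. $\Phi\Omega\Phi^T=\Omega$) by adding $n-1$ rows on the top; that is, there is $\Phi(x)\in Sp(2n,\mathbb C)$ whose $n$-th row is $F^{(n)}$ and whose $(n+i)$-th row is $F^{(i-1)}$ for $1\le i\le n$.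
   Context: $F^{(j)}$ denotes the componentwise $j$-th derivative of $F$ with respect to $x$. *)

theory Defs
  imports Complex_Main "Jordan_Normal_Form.Matrix"
begin

definition Omega :: "nat \<Rightarrow> complex mat" where
  "Omega n = four_block_mat (0\<^sub>m n n) (1\<^sub>m n) (- (1\<^sub>m n)) (0\<^sub>m n n)"

definition Cform :: "nat \<Rightarrow> complex vec \<Rightarrow> complex vec \<Rightarrow> complex" where
  "Cform n X Y = scalar_prod X (Omega n *\<^sub>v Y)"

definition symplectic :: "nat \<Rightarrow> complex mat \<Rightarrow> bool" where
  "symplectic n Phi \<longleftrightarrow> Phi \<in> carrier_mat (2*n) (2*n) \<and>
     Phi * Omega n * transpose_mat Phi = Omega n"

end

theory Submission
  imports Defs "HOL-Complex_Analysis.Cauchy_Integral_Formula"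
begin

text \<open>
  Write g(i,j) = C(F^(i), F^(j)). Since C is bilinear and alternating,
  g(i,j)' = g(i+1,j) + g(i,j+1); so if g vanishes on one antidiagonal i + j = s, it
  alternates in sign along the next one. Starting from g(i,i) = 0 and g(i,i+1) = 0 this
  forces g = 0 on every antidiagonal i + j \<le> 2n - 2, and g(n-1,n) = -1 then makes g
  nowhere zero on i + j = 2n - 1 (the derivatives up to order 2n - 1 exist by holomorphy).
  Hence F, ..., F^(n-1) span a Lagrangian subspace, paired triangularly with
  F^(2n-1), ..., F^(n). Solving the triangular system gives a dual family, which a
  symplectic Gram-Schmidt step makes isotropic without changing its last member F^(n);
  this family and F, ..., F^(n-1) are the rows of \<Phi>.
\<close>

unbundle no vec_syntax
hide_const (open) Finite_Cartesian_Product.vec Finite_Cartesian_Product.mat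
  Finite_Cartesian_Product.row Finite_Cartesian_Product.transpose

definition sform :: "nat \<Rightarrow> (nat \<Rightarrow> complex) \<Rightarrow> (nat \<Rightarrow> complex) \<Rightarrow> complex" where
  "sform n X Y = (\<Sum>k<n. X k * Y (k + n) - X (k + n) * Y k)"

lemma Omega_carrier: "Omega n \<in> carrier_mat (2*n) (2*n)"
  unfolding Omega_def carrier_mat_def by simp

lemma Omega_index:
  "i < 2*n \<Longrightarrow> j < 2*n \<Longrightarrow> Omega n $$ (i, j) =
     (if i < n \<and> j = i + n then 1 else if n \<le> i \<and> j = i - n then -1 else 0)"
  unfolding Omega_def by (simp add: index_mat_four_block one_mat_def) linarith

lemma Omega_mult_vec:
  assumes "i < 2*n"
  shows "(Omega n *\<^sub>v vec (2*n) Y) $ i = (if i < n then Y (i + n) else - Y (i - n))"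
proof -
  have "(Omega n *\<^sub>v vec (2*n) Y) $ i = (\<Sum>j<2*n. Omega n $$ (i, j) * Y j)"
    using assms Omega_carrier[of n] by (auto simp: scalar_prod_def row_def atLeast0LessThan)
  also have "\<dots> = (\<Sum>j<2*n. if j = (if i < n then i + n else i - n)
                       then (if i < n then Y (i + n) else - Y (i - n)) else 0)"
    using assms by (intro sum.cong refl) (auto simp: Omega_index)
  also have "\<dots> = (if i < n then Y (i + n) else - Y (i - n))"
    using assms by (cases "i < n") (simp_all add: sum.delta)
  finally show ?thesis .
qed

lemma Cform_vec_eq_sform: "Cform n (vec (2*n) X) (vec (2*n) Y) = sform n X Y"
proof -
  have "Cform n (vec (2*n) X) (vec (2*n) Y) = (\<Sum>i\<in>{0..<2*n}. X i * (if i < n then Y (i + n) else - Y (i - n)))"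
    unfolding Cform_def scalar_prod_def using Omega_carrier[of n]
    by (intro sum.cong) (auto simp: Omega_mult_vec simp del: index_mult_mat_vec)
  also have "\<dots> = (\<Sum>i\<in>{0..<n}. X i * Y (i + n)) + (\<Sum>i\<in>{n..<2*n}. X i * - Y (i - n))"
    by (subst sum.atLeastLessThan_concat[of 0 n "2*n", symmetric]) auto
  also have "(\<Sum>i\<in>{n..<2*n}. X i * - Y (i - n)) = (\<Sum>i\<in>{0..<n}. X (i + n) * - Y i)"
    using sum.shift_bounds_nat_ivl[of "\<lambda>i. X i * - Y (i - n)" 0 n n] by (simp add: mult_2)
  finally show ?thesis
    unfolding sform_def by (simp add: atLeast0LessThan sum_subtractf sum_negf)
qed

lemma sform_swap: "sform n X Y = - sform n Y X"
  unfolding sform_def by (simp add: sum_negf[symmetric] algebra_simps)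

lemma sform_add_left: "sform n (\<lambda>k. X k + Y k) Z = sform n X Z + sform n Y Z"
  unfolding sform_def by (simp add: sum.distrib[symmetric] algebra_simps)

lemma sform_mult_left: "sform n (\<lambda>k. c * X k) Z = c * sform n X Z"
  unfolding sform_def by (simp add: sum_distrib_left algebra_simps)

lemma sform_sum_left: "sform n (\<lambda>k. \<Sum>j\<in>J. Y j k) Z = (\<Sum>j\<in>J. sform n (Y j) Z)"
  unfolding sform_def
  by (simp add: sum_distrib_right sum_subtractf[symmetric] sum.swap[of _ J])

lemma sform_add_right: "sform n Z (\<lambda>k. X k + Y k) = sform n Z X + sform n Z Y"
  by (subst (1 2 3) sform_swap) (simp add: sform_add_left)

lemma sform_mult_right: "sform n Z (\<lambda>k. c * X k) = c * sform n Z X"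
  by (subst (1 2) sform_swap) (simp add: sform_mult_left)

lemma sform_sum_right: "sform n Z (\<lambda>k. \<Sum>j\<in>J. Y j k) = (\<Sum>j\<in>J. sform n Z (Y j))"
  by (subst sform_swap) (simp add: sform_sum_left sform_swap[of n Z] sum_negf)

lemmas sform_linear =
  sform_add_left sform_mult_left sform_sum_left sform_add_right sform_mult_right sform_sum_right

lemma sum_if_eq_index:
  "finite A \<Longrightarrow> (\<Sum>j\<in>A. f j * (if j = i then 1 else 0)) = (if i \<in> A then f i else (0::'a::semiring_1))"
  by (simp add: if_distrib[where f="\<lambda>x. _ * x"] cong: if_cong)

lemma triangular_dual_family:
  assumes lower: "\<And>k j. k < n \<Longrightarrow> j < k \<Longrightarrow> sform n (y k) (v j) = 0"
    and diag: "\<And>k. k < n \<Longrightarrow> sform n (y k) (v k) \<noteq> 0"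
  obtains u where "\<And>a j. a < n \<Longrightarrow> j < n \<Longrightarrow> sform n (u a) (v j) = (if a = j then 1 else 0)"
proof -
  have "\<exists>u. \<forall>a j. n - m \<le> a \<longrightarrow> a < n \<longrightarrow> j < n \<longrightarrow> sform n (u a) (v j) = (if a = j then 1 else 0)"
    if "m \<le> n" for m
    using that
  proof (induction m)
    case 0
    then show ?case by auto
  next
    case (Suc m)
    then obtain u where u: "\<And>a j. n - m \<le> a \<Longrightarrow> a < n \<Longrightarrow> j < n \<Longrightarrow>
        sform n (u a) (v j) = (if a = j then 1 else 0)"
      by auto
    define a0 where "a0 = n - Suc m"
    have a0: "a0 < n" "n - m = Suc a0"
      using Suc.prems unfolding a0_def by auto
    define c where "c = sform n (y a0) (v a0)"
    have "c \<noteq> 0"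
      using diag a0 unfolding c_def by auto
    \<comment> \<open>Solve row \<open>a0\<close> of the triangular system, using the rows \<open>u a\<close>, \<open>a > a0\<close>, already found.\<close>
    define u0 where "u0 = (\<lambda>k. (1/c) * y a0 k + (\<Sum>j\<in>{a0<..<n}. (- sform n (y a0) (v j) / c) * u j k))"
    have new: "sform n u0 (v i) = (if a0 = i then 1 else 0)" if i: "i < n" for i
    proof -
      have "sform n u0 (v i) = (1/c) * sform n (y a0) (v i)
          + (\<Sum>j\<in>{a0<..<n}. (- sform n (y a0) (v j) / c) * (if j = i then 1 else 0))"
        unfolding u0_def sform_linear using u a0 i by (intro arg_cong2[where f="(+)"] sum.cong) auto
      also have "\<dots> = (1/c) * sform n (y a0) (v i) + (if i \<in> {a0<..<n} then - sform n (y a0) (v i) / c else 0)"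
        by (subst sum_if_eq_index) simp_all
      finally show ?thesis
        using \<open>c \<noteq> 0\<close> i lower[of a0 i] a0 unfolding c_def
        by (cases "a0 < i"; cases "i < a0") (auto simp: field_simps)
    qed
    have "\<forall>a j. n - Suc m \<le> a \<longrightarrow> a < n \<longrightarrow> j < n \<longrightarrow>
        sform n ((u(a0 := u0)) a) (v j) = (if a = j then 1 else 0)"
      using u new a0 unfolding a0_def by (auto simp: le_Suc_eq)
    then show ?case by blast
  qed
  from this[of n] show ?thesis
    using that by auto
qed

lemma isotropic_dual_family:
  assumes isotropic: "\<And>a b. a < n \<Longrightarrow> b < n \<Longrightarrow> sform n (v a) (v b) = 0"
    and dual: "\<And>a b. a < n \<Longrightarrow> b < n \<Longrightarrow> sform n (u a) (v b) = (if a = b then 1 else 0)"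
  obtains u' where "u' (n - 1) = u (n - 1)"
    and "\<And>a b. a < n \<Longrightarrow> b < n \<Longrightarrow> sform n (u' a) (u' b) = 0"
    and "\<And>a b. a < n \<Longrightarrow> b < n \<Longrightarrow> sform n (u' a) (v b) = (if a = b then 1 else 0)"
proof -
  define s where "s a b = sform n (u a) (u b)" for a b
  \<comment> \<open>Adding multiples of the isotropic \<open>v b\<close> keeps duality and cancels \<open>s a b\<close> for \<open>a < b\<close>.\<close>
  define u' where "u' a = (\<lambda>k. u a k + (\<Sum>b\<in>{a<..<n}. s a b * v b k))" for a
  have u'v: "sform n (u' a) (v b) = (if a = b then 1 else 0)" if "a < n" "b < n" for a b
    unfolding u'_def sform_linear using that isotropic dual by simp
  have vu': "sform n (v a) (u' b) = - (if a = b then 1 else 0)" if "a < n" "b < n" for a b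
    using u'v[OF that(2,1)] sform_swap[of n "v a"] by auto
  have u'u': "sform n (u' a) (u' b) = 0" if ab: "a < n" "b < n" for a b
  proof -
    have "sform n (u' a) (u' b) = sform n (u a) (u' b) + (\<Sum>c\<in>{a<..<n}. s a c * sform n (v c) (u' b))"
      unfolding u'_def[of a] sform_linear ..
    also have "sform n (u a) (u' b) = s a b + (\<Sum>d\<in>{b<..<n}. s b d * (if d = a then 1 else 0))"
      unfolding u'_def[of b] sform_linear s_def using dual[of a] ab by (intro arg_cong2[where f="(+)"] sum.cong) auto
    also have "\<dots> = s a b + (if a \<in> {b<..<n} then s b a else 0)"
      by (subst sum_if_eq_index) simp_all
    also have "(\<Sum>c\<in>{a<..<n}. s a c * sform n (v c) (u' b)) = - (\<Sum>c\<in>{a<..<n}. s a c * (if c = b then 1 else 0))"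
      using vu' ab by (auto simp: sum_negf[symmetric] intro: sum.cong)
    also have "\<dots> = - (if b \<in> {a<..<n} then s a b else 0)"
      by (subst sum_if_eq_index) simp_all
    finally have "sform n (u' a) (u' b) = s a b + (if a \<in> {b<..<n} then s b a else 0) - (if b \<in> {a<..<n} then s a b else 0)"
      by simp
    moreover have "s b a = - s a b"
      unfolding s_def by (rule sform_swap)
    ultimately show ?thesis
      using ab by (cases a b rule: linorder_cases) (auto simp: s_def)
  qed
  have "{n - 1<..<n} = {}"
    by auto
  then have "u' (n - 1) = u (n - 1)"
    unfolding u'_def by simp
  then show ?thesis
    using that u'u' u'v by blast
qed

lemma symplectic_mat_of_rows:
  assumes "\<And>a b. a < 2*n \<Longrightarrow> b < 2*n \<Longrightarrow> sform n (R a) (R b) = Omega n $$ (a, b)"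
  shows "symplectic n (mat (2*n) (2*n) (\<lambda>(a, b). R a b))"
proof -
  define P where "P = mat (2*n) (2*n) (\<lambda>(a, b). R a b)"
  have P: "P \<in> carrier_mat (2*n) (2*n)"
    unfolding P_def by simp
  have O: "Omega n \<in> carrier_mat (2*n) (2*n)"
    by (rule Omega_carrier)
  have "P * Omega n * transpose_mat P = Omega n"
  proof (rule eq_matI)
    fix a b assume "a < dim_row (Omega n)" "b < dim_col (Omega n)"
    then have a: "a < 2*n" and b: "b < 2*n"
      using O by auto
    have "(P * Omega n * transpose_mat P) $$ (a, b) = (P * (Omega n * transpose_mat P)) $$ (a, b)"
      using P O by (subst assoc_mult_mat[where n\<^sub>1="2*n" and n\<^sub>2="2*n" and n\<^sub>3="2*n" and n\<^sub>4="2*n"]) auto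
    also have "\<dots> = row P a \<bullet> col (Omega n * transpose_mat P) b"
      using P O a b by (subst index_mult_mat) auto
    also have "col (Omega n * transpose_mat P) b = Omega n *\<^sub>v row P b"
      using P O b by (subst col_mult2[where nr="2*n" and n="2*n" and nc="2*n"]) auto
    also have "row P a \<bullet> (Omega n *\<^sub>v row P b) = sform n (R a) (R b)"
      using a b unfolding P_def by (simp add: Cform_vec_eq_sform[unfolded Cform_def])
    finally show "(P * Omega n * transpose_mat P) $$ (a, b) = Omega n $$ (a, b)"
      using assms a b by simp
  qed (use P O in auto)
  then show ?thesis
    using P unfolding symplectic_def P_def by simp
qed

lemma symplectic_mat_of_dual_pair:
  assumes uu: "\<And>a b. a < n \<Longrightarrow> b < n \<Longrightarrow> sform n (u a) (u b) = 0"
    and vv: "\<And>a b. a < n \<Longrightarrow> b < n \<Longrightarrow> sform n (v a) (v b) = 0"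
    and uv: "\<And>a b. a < n \<Longrightarrow> b < n \<Longrightarrow> sform n (u a) (v b) = (if a = b then 1 else 0)"
  shows "symplectic n (mat (2*n) (2*n) (\<lambda>(a, b). (if a < n then u a else v (a - n)) b))"
proof (rule symplectic_mat_of_rows)
  fix a b assume a: "a < 2*n" and b: "b < 2*n"
  show "sform n (if a < n then u a else v (a - n)) (if b < n then u b else v (b - n)) = Omega n $$ (a, b)"
  proof (cases "a < n"; cases "b < n")
    assume "\<not> a < n" "b < n"
    then show ?thesis
      using a b uv[of b "a - n"] sform_swap[of n "v (a - n)"] by (auto simp: Omega_index)
  qed (use a b uu vv uv in \<open>auto simp: Omega_index\<close>)
qed

lemma symplectic_completion:
  assumes "0 < n"
    and isotropic: "\<And>a b. a < n \<Longrightarrow> b < n \<Longrightarrow> sform n (v a) (v b) = 0"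
    and lower: "\<And>k j. k < n \<Longrightarrow> j < k \<Longrightarrow> sform n (y k) (v j) = 0"
    and diag: "\<And>k. k < n \<Longrightarrow> sform n (y k) (v k) \<noteq> 0"
    and w: "\<And>j. j < n \<Longrightarrow> sform n w (v j) = (if j = n - 1 then 1 else 0)"
  shows "\<exists>Phi. symplectic n Phi \<and> row Phi (n - 1) = vec (2*n) w \<and>
           (\<forall>j<n. row Phi (n + j) = vec (2*n) (v j))"
proof -
  obtain u0 where u0: "\<And>a j. a < n \<Longrightarrow> j < n \<Longrightarrow> sform n (u0 a) (v j) = (if a = j then 1 else 0)"
    using triangular_dual_family[of n y v, OF lower diag] by blast
  have dual: "sform n ((u0(n - 1 := w)) a) (v j) = (if a = j then 1 else 0)" if "a < n" "j < n" for a j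
    using that u0 w by auto
  obtain u where u_last: "u (n - 1) = w"
    and uu: "\<And>a b. a < n \<Longrightarrow> b < n \<Longrightarrow> sform n (u a) (u b) = 0"
    and uv: "\<And>a b. a < n \<Longrightarrow> b < n \<Longrightarrow> sform n (u a) (v b) = (if a = b then 1 else 0)"
    using isotropic_dual_family[of n v "u0(n - 1 := w)", OF isotropic dual] by (metis fun_upd_same)
  define Phi where "Phi = mat (2*n) (2*n) (\<lambda>(a, b). (if a < n then u a else v (a - n)) b)"
  have "symplectic n Phi"
    unfolding Phi_def using uu isotropic uv by (rule symplectic_mat_of_dual_pair)
  moreover have "row Phi (n - 1) = vec (2*n) w"
    unfolding Phi_def using u_last \<open>0 < n\<close> by (auto intro: eq_vecI)
  moreover have "row Phi (n + j) = vec (2*n) (v j)" if "j < n" for j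
    unfolding Phi_def using that by (auto intro: eq_vecI)
  ultimately show ?thesis
    by blast
qed

lemma higher_deriv_eq_derivative_chain:
  fixes f :: "nat \<Rightarrow> complex \<Rightarrow> complex"
  assumes S: "open S" and "0 < n"
    and chain: "\<And>j t. j < n \<Longrightarrow> t \<in> S \<Longrightarrow> (f j has_field_derivative f (Suc j) t) (at t)"
  shows "j \<le> n \<Longrightarrow> t \<in> S \<Longrightarrow> (deriv ^^ j) (f 0) t = f j t"
proof (induction j arbitrary: t)
  case 0
  then show ?case by simp
next
  case (Suc j)
  have "f 0 holomorphic_on S"
    using chain[of 0] \<open>0 < n\<close> holomorphic_on_open[OF S] by blast
  then have "((deriv ^^ j) (f 0) has_field_derivative (deriv ^^ Suc j) (f 0) t) (at t)"
    using holomorphic_derivI[OF holomorphic_higher_deriv[OF _ S] S Suc.prems(2)] by simp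
  moreover have "((deriv ^^ j) (f 0) has_field_derivative f (Suc j) t) (at t)"
    using Suc by (intro has_field_derivative_transform_within_open[OF chain S]) auto
  ultimately show ?case
    by (rule DERIV_unique)
qed

lemma derivative_chain_extends:
  fixes F :: "nat \<Rightarrow> complex \<Rightarrow> 'a \<Rightarrow> complex"
  assumes S: "open S" and "0 < n"
    and chain: "\<And>j k t. j < n \<Longrightarrow> k \<in> K \<Longrightarrow> t \<in> S \<Longrightarrow>
                  ((\<lambda>t. F j t k) has_field_derivative F (Suc j) t k) (at t)"
  obtains D where "\<And>j k t. j \<le> n \<Longrightarrow> k \<in> K \<Longrightarrow> t \<in> S \<Longrightarrow> D j t k = F j t k"
    and "\<And>j k t. k \<in> K \<Longrightarrow> t \<in> S \<Longrightarrow> ((\<lambda>t. D j t k) has_field_derivative D (Suc j) t k) (at t)"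
proof
  fix j k t
  assume k: "k \<in> K" and t: "t \<in> S"
  show "j \<le> n \<Longrightarrow> (deriv ^^ j) (\<lambda>t. F 0 t k) t = F j t k"
    using higher_deriv_eq_derivative_chain[of S n "\<lambda>j t. F j t k"] S \<open>0 < n\<close> chain k t by blast
  have "(\<lambda>t. F 0 t k) holomorphic_on S"
    using chain[of 0 k] \<open>0 < n\<close> k holomorphic_on_open[OF S] by blast
  then show "((\<lambda>t. (deriv ^^ j) (\<lambda>t. F 0 t k) t) has_field_derivative (deriv ^^ Suc j) (\<lambda>t. F 0 t k) t) (at t)"
    using holomorphic_derivI[OF holomorphic_higher_deriv[OF _ S] S t] by simp
qed

lemma has_field_derivative_sform:
  assumes "\<And>k. k < 2*n \<Longrightarrow> ((\<lambda>t. X t k) has_field_derivative X' k) (at t)"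
    and "\<And>k. k < 2*n \<Longrightarrow> ((\<lambda>t. Y t k) has_field_derivative Y' k) (at t)"
  shows "((\<lambda>t. sform n (X t) (Y t)) has_field_derivative sform n X' (Y t) + sform n (X t) Y') (at t)"
proof -
  have "((\<lambda>t. sform n (X t) (Y t)) has_field_derivative
      (\<Sum>k<n. (X' k * Y t (k + n) + Y' (k + n) * X t k) - (X' (k + n) * Y t k + Y' k * X t (k + n)))) (at t)"
    unfolding sform_def by (intro DERIV_sum DERIV_diff DERIV_mult assms) auto
  then show ?thesis
    unfolding sform_def sum.distrib[symmetric] by (simp add: algebra_simps)
qed

locale alternating_leibniz_family =
  fixes S :: "complex set" and g :: "nat \<Rightarrow> nat \<Rightarrow> complex \<Rightarrow> complex"
  assumes open_S: "open S"
    and leibniz: "\<And>i j t. t \<in> S \<Longrightarrow> (g i j has_field_derivative g (Suc i) j t + g i (Suc j) t) (at t)"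
    and alternating: "\<And>i j t. g i j t = - g j i t"
begin

lemma diagonal_zero: "g i i t = 0"
  using alternating[of i i t] by simp

lemma shift_if_vanishing:
  assumes "\<And>t. t \<in> S \<Longrightarrow> g i j t = 0" and "t \<in> S"
  shows "g (Suc i) j t = - g i (Suc j) t"
proof -
  have "((\<lambda>t. 0) has_field_derivative g (Suc i) j t + g i (Suc j) t) (at t)"
    using assms by (intro has_field_derivative_transform_within_open[OF leibniz open_S]) auto
  then have "g (Suc i) j t + g i (Suc j) t = 0"
    using DERIV_const DERIV_unique by blast
  then show ?thesis
    by (simp add: eq_neg_iff_add_eq_0)
qed

lemma alternating_on_next_antidiagonal:
  assumes "\<And>i t. i \<le> s \<Longrightarrow> t \<in> S \<Longrightarrow> g i (s - i) t = 0" and "t \<in> S"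
  shows "i \<le> Suc s \<Longrightarrow> g i (Suc s - i) t = (-1)^i * g 0 (Suc s) t"
proof (induction i)
  case 0
  then show ?case by simp
next
  case (Suc i)
  then have "g (Suc i) (s - i) t = - g i (Suc (s - i)) t"
    using assms by (intro shift_if_vanishing) auto
  moreover have "Suc (s - i) = Suc s - i" "Suc s - Suc i = s - i"
    using Suc.prems by auto
  ultimately show ?case
    using Suc by simp
qed

lemma antidiagonals_vanish:
  assumes step: "\<And>i t. i + 2 \<le> n \<Longrightarrow> t \<in> S \<Longrightarrow> g i (Suc i) t = 0"
  shows "i + j \<le> 2*n - 2 \<Longrightarrow> t \<in> S \<Longrightarrow> g i j t = 0"
proof -
  have "\<forall>i\<le>s. \<forall>t\<in>S. g i (s - i) t = 0" if "s \<le> 2*n - 2" for s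
    using that
  proof (induction s)
    case 0
    then show ?case by (simp add: diagonal_zero)
  next
    case (Suc s)
    then have alt: "i \<le> Suc s \<Longrightarrow> t \<in> S \<Longrightarrow> g i (Suc s - i) t = (-1)^i * g 0 (Suc s) t" for i t
      by (intro alternating_on_next_antidiagonal) auto
    \<comment> \<open>The middle entry of the antidiagonal vanishes, by alternation or by hypothesis.\<close>
    define m where "m = Suc s div 2"
    have middle: "g m (Suc s - m) t = 0" if "t \<in> S" for t
    proof (cases "even (Suc s)")
      case True
      then have "Suc s - m = m"
        unfolding m_def by presburger
      then show ?thesis
        by (simp add: diagonal_zero)
    next
      case False
      then have "Suc s - m = Suc m" "m + 2 \<le> n"
        using Suc.prems unfolding m_def by presburger+
      then show ?thesis
        using step that by simp
    qed
    have "g 0 (Suc s) t = 0" if "t \<in> S" for t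
      using alt[of m t] middle[OF that] that unfolding m_def by simp
    then show ?case
      using alt by simp
  qed
  then show "i + j \<le> 2*n - 2 \<Longrightarrow> t \<in> S \<Longrightarrow> g i j t = 0"
    by (metis add_diff_cancel_left' le_add1)
qed

lemma last_antidiagonal_nonzero:
  assumes "0 < n"
    and step: "\<And>i t. i + 2 \<le> n \<Longrightarrow> t \<in> S \<Longrightarrow> g i (Suc i) t = 0"
    and top: "\<And>t. t \<in> S \<Longrightarrow> g (n - 1) n t \<noteq> 0"
  shows "i + j = 2*n - 1 \<Longrightarrow> t \<in> S \<Longrightarrow> g i j t \<noteq> 0"
proof -
  assume ij: "i + j = 2*n - 1" and t: "t \<in> S"
  have alt: "k \<le> 2*n - 1 \<Longrightarrow> g k (2*n - 1 - k) t = (-1)^k * g 0 (2*n - 1) t" for k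
    using alternating_on_next_antidiagonal[OF antidiagonals_vanish[OF step] t, of "2*n - 2"] \<open>0 < n\<close>
    by (simp add: Suc_diff_Suc)
  have "g (n - 1) (2*n - 1 - (n - 1)) t \<noteq> 0"
    using top[OF t] \<open>0 < n\<close> by (simp add: Suc_diff_Suc mult_2)
  then have "g 0 (2*n - 1) t \<noteq> 0"
    using alt[of "n - 1"] by simp
  moreover have "j = 2*n - 1 - i"
    using ij by simp
  ultimately show "g i j t \<noteq> 0"
    using alt[of i] ij by simp
qed

end

lemma symplectic_completion_of_derivatives:
  assumes n: "0 < n" and S: "open S" and x: "x \<in> S"
    and deriv: "\<And>j k t. k < 2*n \<Longrightarrow> t \<in> S \<Longrightarrow> ((\<lambda>t. D j t k) has_field_derivative D (Suc j) t k) (at t)"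
    and step: "\<And>i t. i + 2 \<le> n \<Longrightarrow> t \<in> S \<Longrightarrow> sform n (D i t) (D (Suc i) t) = 0"
    and top: "\<And>t. t \<in> S \<Longrightarrow> sform n (D (n - 1) t) (D n t) = -1"
  shows "\<exists>Phi. symplectic n Phi \<and> row Phi (n - 1) = vec (2*n) (D n x) \<and>
           (\<forall>j<n. row Phi (n + j) = vec (2*n) (D j x))"
proof -
  define g where "g i j t = sform n (D i t) (D j t)" for i j t
  interpret alternating_leibniz_family S g
  proof
    show "open S"
      by (rule S)
    show "(g i j has_field_derivative g (Suc i) j t + g i (Suc j) t) (at t)" if "t \<in> S" for i j t
      unfolding g_def[abs_def] using deriv that by (intro has_field_derivative_sform) auto
    show "g i j t = - g j i t" for i j t
      unfolding g_def by (rule sform_swap)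
  qed
  have vanish: "g i j x = 0" if "i + j \<le> 2*n - 2" for i j
    using antidiagonals_vanish[of n] step that x unfolding g_def by blast
  have nonzero: "g i j x \<noteq> 0" if "i + j = 2*n - 1" for i j
    using last_antidiagonal_nonzero[OF n] step top that x unfolding g_def by force
  show ?thesis
  proof (rule symplectic_completion[OF n, where y="\<lambda>k. D (2*n - 1 - k) x"])
    show "sform n (D a x) (D b x) = 0" if "a < n" "b < n" for a b
      using vanish[of a b] that unfolding g_def by simp
    show "sform n (D (2*n - 1 - k) x) (D j x) = 0" if "k < n" "j < k" for k j
      using vanish[of "2*n - 1 - k" j] that unfolding g_def by simp
    show "sform n (D (2*n - 1 - k) x) (D k x) \<noteq> 0" if "k < n" for k
      using nonzero[of "2*n - 1 - k" k] that unfolding g_def by simp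
    show "sform n (D n x) (D j x) = (if j = n - 1 then 1 else 0)" if "j < n" for j
      using vanish[of j n] top[OF x] sform_swap[of n "D n x"] that unfolding g_def by auto
  qed
qed

theorem proposition4p3:
  fixes n :: nat and S :: "complex set"
    and F :: "complex \<Rightarrow> nat \<Rightarrow> complex"
    and Fd :: "nat \<Rightarrow> complex \<Rightarrow> nat \<Rightarrow> complex"
  assumes "n \<ge> 1"
    and "open S"
    and "Fd 0 = F"
    and "\<And>j k x. j < n \<Longrightarrow> k < 2*n \<Longrightarrow> x \<in> S \<Longrightarrow>
           ((\<lambda>t. Fd j t k) has_field_derivative Fd (Suc j) x k) (at x)"
    and "\<And>i x. i + 2 \<le> n \<Longrightarrow> x \<in> S \<Longrightarrow>
           Cform n (vec (2*n) (Fd i x)) (vec (2*n) (Fd (Suc i) x)) = 0"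
    and "\<And>x. x \<in> S \<Longrightarrow>
           Cform n (vec (2*n) (Fd (n - 1) x)) (vec (2*n) (Fd n x)) = -1"
  shows "\<forall>x\<in>S. \<exists>Phi. symplectic n Phi \<and>
           row Phi (n - 1) = vec (2*n) (Fd n x) \<and>
           (\<forall>j<n. row Phi (n + j) = vec (2*n) (Fd j x))"
proof
  fix x assume x: "x \<in> S"
  have n: "0 < n"
    using assms(1) by simp
  obtain D where agree: "\<And>j k t. j \<le> n \<Longrightarrow> k \<in> {..<2*n} \<Longrightarrow> t \<in> S \<Longrightarrow> D j t k = Fd j t k"
    and deriv: "\<And>j k t. k \<in> {..<2*n} \<Longrightarrow> t \<in> S \<Longrightarrow> ((\<lambda>t. D j t k) has_field_derivative D (Suc j) t k) (at t)"
    using derivative_chain_extends[of S n "{..<2*n}" Fd] assms(2,4) n by auto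
  have vec_D: "vec (2*n) (D j t) = vec (2*n) (Fd j t)" if "j \<le> n" "t \<in> S" for j t
    using agree that by (intro eq_vecI) auto
  have "\<exists>Phi. symplectic n Phi \<and> row Phi (n - 1) = vec (2*n) (D n x) \<and>
      (\<forall>j<n. row Phi (n + j) = vec (2*n) (D j x))"
  proof (rule symplectic_completion_of_derivatives[OF n assms(2) x])
    show "((\<lambda>t. D j t k) has_field_derivative D (Suc j) t k) (at t)" if "k < 2*n" "t \<in> S" for j k t
      using deriv that by simp
    show "sform n (D i t) (D (Suc i) t) = 0" if "i + 2 \<le> n" "t \<in> S" for i t
      using assms(5)[OF that] that vec_D[of i t] vec_D[of "Suc i" t] by (simp add: Cform_vec_eq_sform[symmetric])
    show "sform n (D (n - 1) t) (D n t) = -1" if "t \<in> S" for t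
      using assms(6)[OF that] that vec_D[of "n - 1" t] vec_D[of n t] by (simp add: Cform_vec_eq_sform[symmetric])
  qed
  then show "\<exists>Phi. symplectic n Phi \<and> row Phi (n - 1) = vec (2*n) (Fd n x) \<and>
      (\<forall>j<n. row Phi (n + j) = vec (2*n) (Fd j x))"
    using vec_D x by simp
qed

end
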